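(* Let $(\tilde\Theta^n_I)$ be a congruent family of covariant $n$-tensor fields on $\mathcal M_+(I)$, $I$ ranging over finite sets. Then there is a congruent family $(\tilde\Psi^n_I)$ of the form $(\tilde\Psi^n_I)_\mu=\sum_{\mathbf P\in\mathbf{Part}(n)}a_{\mathbf P}(\|\mu\|)(\tau^{\mathbf P}_I)_\mu$ with functions $a_{\mathbf P}:(0,\infty)\to\mathbb R$, such that $(\tilde\Theta^n_I-\tilde\Psi^n_I)_{\lambda c_I}=0$ for all finite sets $I$ and all $\lambda>0$.
   Context: $\mathbf{Part}(n)$ is the set of partitions of $\{1,\dots,n\}$. For a finite set $I$: $\mathcal S(I)=\{\sum_{i\in I}x_i\delta_i\}$, $\|\sum x_i\delta_i\|=\sum|x_i|$, $\mathcal M_+(I)=\{\sum\mu_i\delta_i:\mu_i>0\}$ (tangent space $\mathcal S(I)$), $c_I:=\frac1{|I|}\sum_i\delta_i$. A covariant $n$-tensor field on $\mathcal M_+(I)$ is a continuously varying family of $n$-multilinear forms on $\mathcal S(I)$. For $\mu=\sum\mu_i\delta_i$ and $V_k=\sum_iV_k^i\delta_i$, $(\tau^m_I)_\mu(V_1,\dots,V_m)=\sum_i\mu_i^{1-m}V_1^i\cdots V_m^i$, and for $\mathbf P=\{P_1,\dots,P_l\}$, $(\tau^{\mathbf P}_I)_\mu(V_1,\dots,V_n)=\prod_i(\tau^{|P_i|}_I)_\mu((V_j)_{j\in P_i})$. A Markov kernel $K:I\to\mathcal P(I')$ between finite sets is a stochastic matrix $K(i)=\sum_{i'}K^i_{i'}\delta_{i'}$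 with $K_*(\sum x_i\delta_i)=\sum_{i,i'}K^i_{i'}x_i\delta_{i'}$; it is congruent if there is a map $\kappa:I'\to I$ with $K^i_{i'}=0$ whenever $\kappa(i')\ne i$. A family is congruent if $(\Theta_{I'})_{K_*\mu}(K_*V_1,\dots,K_*V_n)=(\Theta_I)_\mu(V_1,\dots,V_n)$ for every congruent Markov kernel $K:I\to\mathcal P(I')$ between finite sets with $K_*(\mathcal M_+(I))\subset\mathcal M_+(I')$. *)

theory Defs
  imports "HOL-Analysis.Analysis" "HOL-Library.Disjoint_Sets"
begin

text \<open>Finite sets I are finite nonempty subsets of nat. Signed measures S(I) are
functions nat => real vanishing outside I; the topology on M_+(I) is the
(product) topology of nat => real. Tangent vectors V_1..V_n are a list of
length n (0-based indices).\<close>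

definition Sig :: "nat set \<Rightarrow> (nat \<Rightarrow> real) set" where
  "Sig I = {x. \<forall>i. i \<notin> I \<longrightarrow> x i = 0}"

definition Mplus :: "nat set \<Rightarrow> (nat \<Rightarrow> real) set" where
  "Mplus I = {\<mu> \<in> Sig I. \<forall>i\<in>I. \<mu> i > 0}"

definition norm1 :: "nat set \<Rightarrow> (nat \<Rightarrow> real) \<Rightarrow> real" where
  "norm1 I x = (\<Sum>i\<in>I. \<bar>x i\<bar>)"

definition cI :: "nat set \<Rightarrow> nat \<Rightarrow> real" where
  "cI I = (\<lambda>i. if i \<in> I then 1 / real (card I) else 0)"

definition Part :: "nat \<Rightarrow> nat set set set" where
  "Part n = {P. partition_on {0..<n} P}"

definition tau_m :: "nat set \<Rightarrow> nat \<Rightarrow> (nat \<Rightarrow> real) \<Rightarrow> (nat \<Rightarrow> real) list \<Rightarrow> real" where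
  "tau_m I m \<mu> W = (\<Sum>i\<in>I. \<mu> i powr (1 - real m) * (\<Prod>k<length W. (W ! k) i))"

definition tauP :: "nat set \<Rightarrow> nat set set \<Rightarrow> (nat \<Rightarrow> real) \<Rightarrow> (nat \<Rightarrow> real) list \<Rightarrow> real" where
  "tauP I P \<mu> V = (\<Prod>B\<in>P. tau_m I (card B) \<mu> (map (\<lambda>j. V ! j) (sorted_list_of_set B)))"

definition congruent_markov_kernel :: "nat set \<Rightarrow> nat set \<Rightarrow> (nat \<Rightarrow> nat \<Rightarrow> real) \<Rightarrow> bool" where
  "congruent_markov_kernel I I' K \<longleftrightarrow>
     (\<forall>i\<in>I. \<forall>i'\<in>I'. K i i' \<ge> 0) \<and> (\<forall>i\<in>I. (\<Sum>i'\<in>I'. K i i') = 1) \<and>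
     (\<exists>\<kappa>. (\<forall>i'\<in>I'. \<kappa> i' \<in> I) \<and> (\<forall>i\<in>I. \<forall>i'\<in>I'. \<kappa> i' \<noteq> i \<longrightarrow> K i i' = 0))"

definition push :: "nat set \<Rightarrow> nat set \<Rightarrow> (nat \<Rightarrow> nat \<Rightarrow> real) \<Rightarrow> (nat \<Rightarrow> real) \<Rightarrow> (nat \<Rightarrow> real)" where
  "push I I' K x = (\<lambda>i'. if i' \<in> I' then (\<Sum>i\<in>I. K i i' * x i) else 0)"

definition congruent_family ::
  "nat \<Rightarrow> (nat set \<Rightarrow> (nat \<Rightarrow> real) \<Rightarrow> (nat \<Rightarrow> real) list \<Rightarrow> real) \<Rightarrow> bool" where
  "congruent_family n \<Theta> \<longleftrightarrow>
    (\<forall>I I' K. finite I \<and> I \<noteq> {} \<and> finite I' \<and> I' \<noteq> {} \<and> congruent_markov_kernel I I' K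
       \<and> push I I' K ` Mplus I \<subseteq> Mplus I' \<longrightarrow>
       (\<forall>\<mu>\<in>Mplus I. \<forall>V. length V = n \<and> set V \<subseteq> Sig I \<longrightarrow>
          \<Theta> I' (push I I' K \<mu>) (map (push I I' K) V) = \<Theta> I \<mu> V))"

definition covariant_tensor_field ::
  "nat \<Rightarrow> nat set \<Rightarrow> ((nat \<Rightarrow> real) \<Rightarrow> (nat \<Rightarrow> real) list \<Rightarrow> real) \<Rightarrow> bool" where
  "covariant_tensor_field n I T \<longleftrightarrow>
    (\<forall>\<mu>\<in>Mplus I. \<forall>V. length V = n \<and> set V \<subseteq> Sig I \<longrightarrow>
       (\<forall>j<n. \<forall>x\<in>Sig I. \<forall>y\<in>Sig I. \<forall>c::real.
          T \<mu> (V[j := (\<lambda>i. c * x i + y i)]) = c * T \<mu> (V[j := x]) + T \<mu> (V[j := y]))) \<and>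
    (\<forall>V. length V = n \<and> set V \<subseteq> Sig I \<longrightarrow> continuous_on (Mplus I) (\<lambda>\<mu>. T \<mu> V))"

end

(*
  At the centre t c_I a congruent family is invariant under permutations of I, so its value
  on a tuple of Dirac vectors indicator {iota 0}, ..., indicator {iota (n-1)} depends only on the
  partition of {0..<n} into the fibres of iota.  On such a tuple tau^P vanishes unless P
  refines that partition, and is nonzero if it does; hence the coefficients of Theta with
  respect to the tau^P solve a unitriangular system over the refinement order, which has a
  unique solution once |I| >= n, so that every partition is the fibre partition of some iota.
  Splitting each point of I uniformly into m points is a congruent kernel that maps t c_I to
  t c_J; so the coefficients found on the common refinement J = I x {0..n} are valid on I and
  on {0..n} alike, and uniqueness on {0..n} makes them independent of I.
*)
theory Submission
  imports Defs
begin

section \<open>Partitions, fibres and permutations\<close>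

lemma partition_on_part_unique:
  "partition_on A P \<Longrightarrow> p \<in> P \<Longrightarrow> q \<in> P \<Longrightarrow> x \<in> p \<Longrightarrow> x \<in> q \<Longrightarrow> p = q"
  unfolding partition_on_def disjoint_def by blast

lemma partition_on_part_subset: "partition_on A P \<Longrightarrow> B \<in> P \<Longrightarrow> B \<subseteq> A"
  by (auto simp: partition_on_def)

lemma finite_Part: "finite (Part n)"
  unfolding Part_def by (simp add: finitely_many_partition_on)

lemma Part_block: "P \<in> Part n \<Longrightarrow> B \<in> P \<Longrightarrow> finite B \<and> B \<subseteq> {0..<n}"
  unfolding Part_def partition_on_def by (auto intro: finite_subset)

lemma card_partition_on_le:
  assumes "partition_on A P" "finite A"
  shows "card P \<le> card A"
proof -
  have fin: "finite p" if "p \<in> P" for p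
    using partition_on_part_subset[OF assms(1) that] assms(2) by (rule finite_subset)
  have "card P = (\<Sum>p\<in>P. 1)" by simp
  also have "\<dots> \<le> (\<Sum>p\<in>P. card p)"
    using fin partition_onD3[OF assms(1)] by (intro sum_mono) (auto simp: Suc_le_eq card_gt_0_iff)
  also have "\<dots> = card A" using product_partition[OF assms(1) fin] by simp
  finally show ?thesis .
qed

definition fibres :: "'a set \<Rightarrow> ('a \<Rightarrow> 'b) \<Rightarrow> 'a set set" where
  "fibres A f = (\<lambda>x. {y \<in> A. f y = f x}) ` A"

lemma partition_on_fibres: "partition_on A (fibres A f)"
  by (rule partition_onI) (auto simp: fibres_def disjnt_def)

lemma fibres_in_Part: "fibres {0..<n} f \<in> Part n"
  unfolding Part_def by (simp add: partition_on_fibres)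

lemma fibres_eqD:
  assumes eq: "fibres A f = fibres A g" and x: "x \<in> A" and y: "y \<in> A"
  shows "f x = f y \<longleftrightarrow> g x = g y"
proof -
  have "{z \<in> A. f z = f x} \<in> fibres A f"
    unfolding fibres_def using x by (rule imageI)
  then have "{z \<in> A. f z = f x} \<in> fibres A g" by (simp only: eq)
  then obtain x' where fib: "{z \<in> A. f z = f x} = {z \<in> A. g z = g x'}"
    unfolding fibres_def by (rule imageE)
  have "x \<in> {z \<in> A. f z = f x}" using x by simp
  then have gx: "g x' = g x" by (simp only: fib) simp
  have "y \<in> {z \<in> A. f z = f x} \<longleftrightarrow> y \<in> {z \<in> A. g z = g x'}" by (simp only: fib)
  then have "(f y = f x) = (g y = g x')" using y by simp
  then show ?thesis unfolding gx by metis
qed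

lemma refines_fibres_iff:
  assumes P: "partition_on A P"
  shows "refines A P (fibres A f) \<longleftrightarrow> (\<forall>B\<in>P. \<forall>x\<in>B. \<forall>y\<in>B. f x = f y)"
proof
  assume "refines A P (fibres A f)"
  show "\<forall>B\<in>P. \<forall>x\<in>B. \<forall>y\<in>B. f x = f y"
  proof (intro ballI)
    fix B x y assume "B \<in> P" "x \<in> B" "y \<in> B"
    then obtain C where "C \<in> fibres A f" "B \<subseteq> C"
      using \<open>refines A P (fibres A f)\<close> unfolding refines_def by blast
    then obtain a where "B \<subseteq> {z \<in> A. f z = f a}" unfolding fibres_def by blast
    then have "f x = f a" "f y = f a" using \<open>x \<in> B\<close> \<open>y \<in> B\<close> by auto
    then show "f x = f y" by simp
  qed
next
  assume const: "\<forall>B\<in>P. \<forall>x\<in>B. \<forall>y\<in>B. f x = f y"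
  have "\<exists>C\<in>fibres A f. B \<subseteq> C" if "B \<in> P" for B
  proof -
    have "B \<noteq> {}" using partition_onD3[OF P] that by blast
    then obtain x where "x \<in> B" by blast
    have "B \<subseteq> A" using P that by (rule partition_on_part_subset)
    then have "B \<subseteq> {z \<in> A. f z = f x}" using const that \<open>x \<in> B\<close> by blast
    moreover have "{z \<in> A. f z = f x} \<in> fibres A f"
      unfolding fibres_def using \<open>x \<in> B\<close> \<open>B \<subseteq> A\<close> by (intro imageI) blast
    ultimately show ?thesis by blast
  qed
  then show "refines A P (fibres A f)"
    unfolding refines_def by (intro conjI P partition_on_fibres ballI)
qed

lemma fibres_comp_inj_on: "inj_on g (f ` A) \<Longrightarrow> fibres A (g \<circ> f) = fibres A f"
  unfolding fibres_def by (rule image_cong) (auto dest: inj_onD)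

definition block_of :: "'a set set \<Rightarrow> 'a \<Rightarrow> 'a set" where
  "block_of P x = (THE B. B \<in> P \<and> x \<in> B)"

lemma block_of_eq:
  assumes "partition_on A P" "B \<in> P" "x \<in> B"
  shows "block_of P x = B"
  unfolding block_of_def
  by (rule the_equality) (use assms partition_on_part_unique[OF assms(1)] in blast)+

lemma block_of_mem:
  assumes "partition_on A P" "x \<in> A"
  shows "block_of P x \<in> P" "x \<in> block_of P x"
proof -
  obtain B where "B \<in> P" "x \<in> B" using assms partition_onD1 by blast
  then show "block_of P x \<in> P" "x \<in> block_of P x" using block_of_eq[OF assms(1)] by simp_all
qed

lemma fibres_block_of:
  assumes P: "partition_on A P"
  shows "fibres A (block_of P) = P"
proof -
  have "{y \<in> A. block_of P y = block_of P x} = block_of P x" if "x \<in> A" for x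
  proof -
    have "block_of P y = block_of P x \<longleftrightarrow> y \<in> block_of P x" if "y \<in> A" for y
      using block_of_mem[OF P] block_of_eq[OF P] \<open>x \<in> A\<close> that by metis
    moreover have "block_of P x \<subseteq> A"
      using partition_on_part_subset[OF P block_of_mem(1)[OF P that]] .
    ultimately show ?thesis by blast
  qed
  then have "fibres A (block_of P) = block_of P ` A" unfolding fibres_def by simp
  also have "\<dots> = P"
  proof
    show "block_of P ` A \<subseteq> P" using block_of_mem[OF P] by blast
    show "P \<subseteq> block_of P ` A"
    proof
      fix B assume "B \<in> P"
      then obtain x where "x \<in> B" using partition_onD3[OF P] by (metis ex_in_conv)
      then have "x \<in> A" "block_of P x = B"
        using partition_on_part_subset[OF P \<open>B \<in> P\<close>] block_of_eq[OF P \<open>B \<in> P\<close>] by auto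
      then show "B \<in> block_of P ` A" by (metis imageI)
    qed
  qed
  finally show ?thesis .
qed

lemma exists_fibres_eq:
  assumes Q: "partition_on A Q" and fin: "finite A" "finite I" and card: "card Q \<le> card I"
  obtains f where "f ` A \<subseteq> I" "fibres A f = Q"
proof -
  have "finite Q" using Q fin(1) by (rule finite_elements[rotated])
  then obtain g where g: "g ` Q \<subseteq> I" "inj_on g Q" using card_le_inj[OF _ fin(2) card] by blast
  have blocks: "block_of Q ` A \<subseteq> Q" using block_of_mem[OF Q] by blast
  show ?thesis
  proof (rule that)
    show "(g \<circ> block_of Q) ` A \<subseteq> I" using blocks g(1) by auto
    have "fibres A (g \<circ> block_of Q) = fibres A (block_of Q)"
      using inj_on_subset[OF g(2) blocks] by (rule fibres_comp_inj_on)
    then show "fibres A (g \<circ> block_of Q) = Q" using fibres_block_of[OF Q] by simp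
  qed
qed

lemma exists_fibres_eq_Part:
  assumes "Q \<in> Part n" "finite I" "n \<le> card I"
  obtains \<iota> where "\<forall>k<n. \<iota> k \<in> I" "fibres {0..<n} \<iota> = Q"
proof -
  have Q: "partition_on {0..<n} Q" using assms(1) unfolding Part_def by simp
  then have "card Q \<le> card I" using card_partition_on_le[OF Q] assms(3) by simp
  then obtain f where "f ` {0..<n} \<subseteq> I" "fibres {0..<n} f = Q"
    using exists_fibres_eq[OF Q _ assms(2)] by blast
  then show ?thesis by (intro that) auto
qed

lemma exists_bij_betw_extension:
  assumes "finite I" "A \<subseteq> I" "inj_on h A" "h ` A \<subseteq> I"
  obtains \<kappa> where "bij_betw \<kappa> I I" "\<forall>x\<in>A. \<kappa> x = h x"
proof -
  have "card (I - A) = card (I - h ` A)"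
    using assms by (simp add: card_Diff_subset finite_subset card_image)
  then obtain g where g: "bij_betw g (I - A) (I - h ` A)"
    using finite_same_card_bij assms(1) by (meson finite_Diff)
  define \<kappa> where "\<kappa> x = (if x \<in> A then h x else g x)" for x
  have "bij_betw \<kappa> A (h ` A)"
    using assms(3) unfolding \<kappa>_def by (simp add: bij_betw_imageI cong: bij_betw_cong)
  moreover have "bij_betw \<kappa> (I - A) (I - h ` A)"
    using g unfolding \<kappa>_def by (rule bij_betw_cong[THEN iffD1, rotated]) auto
  ultimately have "bij_betw \<kappa> (A \<union> (I - A)) (h ` A \<union> (I - h ` A))"
    by (rule bij_betw_combine) blast
  moreover have "A \<union> (I - A) = I" "h ` A \<union> (I - h ` A) = I" using assms(2,4) by auto
  ultimately have "bij_betw \<kappa> I I" by simp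
  then show ?thesis using that unfolding \<kappa>_def by simp
qed

lemma card_fibre_bij_betw:
  assumes "bij_betw \<kappa> I I" "i \<in> I"
  shows "card {j\<in>I. \<kappa> j = i} = 1"
proof -
  have "{j\<in>I. \<kappa> j = i} = {inv_into I \<kappa> i}"
    using assms by (auto simp: bij_betw_def inv_into_into f_inv_into_f)
  then show ?thesis by simp
qed

lemma exists_permutation_fibres_eq:
  fixes \<iota> \<iota>' :: "nat \<Rightarrow> 'a"
  assumes I: "finite I" and \<iota>: "\<forall>k<n. \<iota> k \<in> I" and \<iota>': "\<forall>k<n. \<iota>' k \<in> I"
    and fibres: "fibres {0..<n} \<iota> = fibres {0..<n} \<iota>'"
  obtains \<kappa> where "bij_betw \<kappa> I I" "\<forall>k<n. \<kappa> (\<iota>' k) = \<iota> k"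
proof -
  define h where "h = \<iota> \<circ> inv_into {0..<n} \<iota>'"
  have h: "h (\<iota>' k) = \<iota> k" if "k < n" for k
  proof -
    have "\<iota>' k \<in> \<iota>' ` {0..<n}" using that by simp
    then have inv: "inv_into {0..<n} \<iota>' (\<iota>' k) \<in> {0..<n}" "\<iota>' (inv_into {0..<n} \<iota>' (\<iota>' k)) = \<iota>' k"
      by (rule inv_into_into, rule f_inv_into_f)
    have "\<iota> (inv_into {0..<n} \<iota>' (\<iota>' k)) = \<iota> k"
      using fibres_eqD[OF fibres inv(1), of k] inv(2) that by simp
    then show ?thesis unfolding h_def by simp
  qed
  have inj: "inj_on h (\<iota>' ` {0..<n})"
  proof (rule inj_onI)
    fix x y assume "x \<in> \<iota>' ` {0..<n}" "y \<in> \<iota>' ` {0..<n}" "h x = h y"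
    then obtain j k where "j < n" "k < n" "x = \<iota>' j" "y = \<iota>' k" "\<iota> j = \<iota> k" using h by auto
    then show "x = y" using fibres_eqD[OF fibres, of j k] by simp
  qed
  have "\<iota>' ` {0..<n} \<subseteq> I" "h ` \<iota>' ` {0..<n} \<subseteq> I" using h \<iota> \<iota>' by auto
  then obtain \<kappa> where "bij_betw \<kappa> I I" "\<forall>x\<in>\<iota>' ` {0..<n}. \<kappa> x = h x"
    using exists_bij_betw_extension[OF I _ inj] by blast
  then show ?thesis using that h by simp
qed

section \<open>Unitriangular systems over a finite partial order\<close>

context
  fixes S :: "'a set" and R :: "'a \<Rightarrow> 'a \<Rightarrow> bool"
  assumes finite_S: "finite S"
    and R_refl: "\<And>P. P \<in> S \<Longrightarrow> R P P"
    and R_antisym: "\<And>P Q. P \<in> S \<Longrightarrow> Q \<in> S \<Longrightarrow> R P Q \<Longrightarrow> R Q P \<Longrightarrow> P = Q"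
    and R_trans: "\<And>P Q U. P \<in> S \<Longrightarrow> Q \<in> S \<Longrightarrow> U \<in> S \<Longrightarrow> R P Q \<Longrightarrow> R Q U \<Longrightarrow> R P U"
begin

lemma card_down_set_less:
  assumes "P \<in> S" "Q \<in> S" "R P Q" "P \<noteq> Q"
  shows "card {U \<in> S. R U P} < card {U \<in> S. R U Q}"
proof (rule psubset_card_mono)
  show "finite {U \<in> S. R U Q}" using finite_S by simp
  have "{U \<in> S. R U P} \<subseteq> {U \<in> S. R U Q}" using assms R_trans by blast
  moreover have "Q \<notin> {U \<in> S. R U P}" using assms R_antisym by blast
  moreover have "Q \<in> {U \<in> S. R U Q}" using assms R_refl by blast
  ultimately show "{U \<in> S. R U P} \<subset> {U \<in> S. R U Q}" by blast
qed

lemma sum_down_set_split: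
  "Q \<in> S \<Longrightarrow> (\<Sum>P\<in>{P \<in> S. R P Q}. d P) = d Q + (\<Sum>P\<in>{P \<in> S. R P Q} - {Q}. d P)"
  using finite_S R_refl by (subst sum.remove[of _ Q]) auto

lemma unitriangular_system_unique:
  fixes d :: "'a \<Rightarrow> 'b::comm_monoid_add"
  assumes "\<forall>Q\<in>S. (\<Sum>P\<in>{P \<in> S. R P Q}. d P) = 0"
  shows "\<forall>Q\<in>S. d Q = 0"
proof -
  have "Q \<in> S \<longrightarrow> d Q = 0" for Q
  proof (induction Q rule: measure_induct_rule[where f="\<lambda>Q. card {U \<in> S. R U Q}"])
    case (less Q)
    show ?case
    proof
      assume Q: "Q \<in> S"
      have "(\<Sum>P\<in>{P \<in> S. R P Q} - {Q}. d P) = 0"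
        using less card_down_set_less Q by (intro sum.neutral) blast
      then show "d Q = 0" using assms Q sum_down_set_split[OF Q, of d] by simp
    qed
  qed
  then show ?thesis by blast
qed

lemma unitriangular_system_solvable:
  fixes f :: "'a \<Rightarrow> 'b::ab_group_add"
  shows "\<exists>d. \<forall>Q\<in>S. f Q = (\<Sum>P\<in>{P \<in> S. R P Q}. d P)"
proof -
  let ?rank = "\<lambda>Q. card {U \<in> S. R U Q}"
  have "\<exists>d. \<forall>Q\<in>S. ?rank Q < k \<longrightarrow> f Q = (\<Sum>P\<in>{P \<in> S. R P Q}. d P)" for k
  proof (induction k)
    case 0
    then show ?case by simp
  next
    case (Suc k)
    then obtain d where d: "\<forall>Q\<in>S. ?rank Q < k \<longrightarrow> f Q = (\<Sum>P\<in>{P \<in> S. R P Q}. d P)" by blast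
    define d' where "d' Q = (if Q \<in> S \<and> ?rank Q = k
        then f Q - (\<Sum>P\<in>{P \<in> S. R P Q} - {Q}. d P) else d Q)" for Q
    show ?case
    proof (intro exI ballI impI)
      fix Q assume Q: "Q \<in> S" and rank: "?rank Q < Suc k"
      have "d' P = d P" if "P \<in> {P \<in> S. R P Q} - {Q}" for P
        using that card_down_set_less[of P Q] Q rank unfolding d'_def by auto
      then have lower: "(\<Sum>P\<in>{P \<in> S. R P Q} - {Q}. d' P) = (\<Sum>P\<in>{P \<in> S. R P Q} - {Q}. d P)"
        by (rule sum.cong[OF refl])
      show "f Q = (\<Sum>P\<in>{P \<in> S. R P Q}. d' P)"
      proof (cases "?rank Q < k")
        case True
        then have "d' Q = d Q" unfolding d'_def by simp
        then show ?thesis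
          using d Q True lower sum_down_set_split[OF Q, of d] sum_down_set_split[OF Q, of d'] by simp
      next
        case False
        then have "d' Q = f Q - (\<Sum>P\<in>{P \<in> S. R P Q} - {Q}. d P)"
          using Q rank unfolding d'_def by simp
        then show ?thesis using lower sum_down_set_split[OF Q, of d'] by simp
      qed
    qed
  qed
  moreover have "?rank Q < Suc (card S)" if "Q \<in> S" for Q
    using finite_S by (simp add: card_mono less_Suc_eq_le)
  ultimately show ?thesis by blast
qed

end

lemma refines_Part_order:
  shows "P \<in> Part n \<Longrightarrow> refines {0..<n} P P"
    and "P \<in> Part n \<Longrightarrow> Q \<in> Part n \<Longrightarrow> refines {0..<n} P Q \<Longrightarrow> refines {0..<n} Q P \<Longrightarrow> P = Q"
    and "P \<in> Part n \<Longrightarrow> Q \<in> Part n \<Longrightarrow> U \<in> Part n \<Longrightarrow> refines {0..<n} P Q \<Longrightarrow> refines {0..<n} Q U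
      \<Longrightarrow> refines {0..<n} P U"
  by (simp_all add: Part_def refines_refl refines_asym refines_trans[of _ P Q U])

lemma Part_unitriangular_system_solvable:
  "\<exists>d. \<forall>Q\<in>Part n. f Q = (\<Sum>P\<in>{P \<in> Part n. refines {0..<n} P Q}. d P :: real)"
  by (rule unitriangular_system_solvable[OF finite_Part]) (use refines_Part_order in metis)+

lemma Part_unitriangular_system_unique:
  fixes d :: "nat set set \<Rightarrow> real"
  assumes "\<forall>Q\<in>Part n. (\<Sum>P\<in>{P \<in> Part n. refines {0..<n} P Q}. d P) = 0"
  shows "\<forall>Q\<in>Part n. d Q = 0"
  by (rule unitriangular_system_unique[OF finite_Part _ _ _ assms]) (use refines_Part_order in metis)+

section \<open>Multilinear forms and Dirac tuples\<close>

definition multilinear_on :: "nat \<Rightarrow> nat set \<Rightarrow> ((nat \<Rightarrow> real) list \<Rightarrow> real) \<Rightarrow> bool" where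
  "multilinear_on n I T \<longleftrightarrow> (\<forall>V. length V = n \<and> set V \<subseteq> Sig I \<longrightarrow>
     (\<forall>j<n. \<forall>x\<in>Sig I. \<forall>y\<in>Sig I. \<forall>c::real.
        T (V[j := (\<lambda>i. c * x i + y i)]) = c * T (V[j := x]) + T (V[j := y])))"

definition dirac_list :: "nat \<Rightarrow> (nat \<Rightarrow> nat) \<Rightarrow> (nat \<Rightarrow> real) list" where
  "dirac_list n \<iota> = map (\<lambda>k. indicator {\<iota> k}) [0..<n]"

lemma indicator_singleton_in_Sig: "i \<in> I \<Longrightarrow> indicator {i} \<in> Sig I"
  unfolding Sig_def by (auto simp: indicator_def)

lemma zero_in_Sig: "(\<lambda>_. 0) \<in> Sig I"
  unfolding Sig_def by simp

lemma dirac_list_in_Sig: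
  "\<forall>k<n. \<iota> k \<in> I \<Longrightarrow> length (dirac_list n \<iota>) = n \<and> set (dirac_list n \<iota>) \<subseteq> Sig I"
  unfolding dirac_list_def using indicator_singleton_in_Sig by auto

lemma Sig_eq_sum_indicator:
  assumes "finite I" "v \<in> Sig I"
  shows "v = (\<lambda>x. \<Sum>i\<in>I. v i * indicator {i} x)"
proof
  fix x
  show "v x = (\<Sum>i\<in>I. v i * indicator {i} x)"
  proof (cases "x \<in> I")
    case True
    have "(\<Sum>i\<in>I. v i * indicator {i} x) = (\<Sum>i\<in>I. if i = x then v x else 0)"
      by (rule sum.cong) (auto simp: indicator_def)
    then show ?thesis using True assms(1) by simp
  next
    case False
    have "(\<Sum>i\<in>I. v i * indicator {i} x) = 0"
      using False by (intro sum.neutral) (auto simp: indicator_def)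
    then show ?thesis using False assms(2) unfolding Sig_def by simp
  qed
qed

lemma multilinear_onD:
  "multilinear_on n I T \<Longrightarrow> length V = n \<Longrightarrow> set V \<subseteq> Sig I \<Longrightarrow> j < n \<Longrightarrow> x \<in> Sig I \<Longrightarrow> y \<in> Sig I \<Longrightarrow>
   T (V[j := (\<lambda>i. c * x i + y i)]) = c * T (V[j := x]) + T (V[j := y])"
  unfolding multilinear_on_def by blast

lemma multilinear_on_sum:
  assumes T: "multilinear_on n I T" and V: "length V = n" "set V \<subseteq> Sig I" and j: "j < n"
    and "finite A" "\<forall>a\<in>A. g a \<in> Sig I"
  shows "T (V[j := (\<lambda>x. \<Sum>a\<in>A. c a * g a x)]) = (\<Sum>a\<in>A. c a * T (V[j := g a]))"
  using assms(5,6)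
proof (induction A rule: finite_induct)
  case empty
  have "T (V[j := (\<lambda>_. 0)]) = 1 * T (V[j := (\<lambda>_. 0)]) + T (V[j := (\<lambda>_. 0)])"
    using multilinear_onD[OF T V j zero_in_Sig zero_in_Sig, of 1] by simp
  then show ?case by simp
next
  case (insert a A)
  have "(\<lambda>x. \<Sum>a\<in>A. c a * g a x) \<in> Sig I"
    using insert.prems unfolding Sig_def by auto
  then have "T (V[j := (\<lambda>i. c a * g a i + (\<Sum>a\<in>A. c a * g a i))])
      = c a * T (V[j := g a]) + T (V[j := (\<lambda>x. \<Sum>a\<in>A. c a * g a x)])"
    using multilinear_onD[OF T V j, of "g a"] insert.prems by simp
  then show ?case using insert by simp
qed

lemma multilinear_on_eqI_slot:
  assumes I: "finite I" and T1: "multilinear_on n I T1" and T2: "multilinear_on n I T2"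
    and V: "length V = n" "set V \<subseteq> Sig I" and "m < n"
    and slot: "\<And>i. i \<in> I \<Longrightarrow> T1 (V[m := indicator {i}]) = T2 (V[m := indicator {i}])"
  shows "T1 V = T2 V"
proof -
  have "V!m \<in> Sig I" using V \<open>m < n\<close> by (metis nth_mem subsetD)
  then have expand: "V = V[m := (\<lambda>x. \<Sum>i\<in>I. (V!m) i * indicator {i} x)]"
    using Sig_eq_sum_indicator[OF I] by simp
  have diracs: "\<forall>i\<in>I. indicator {i} \<in> Sig I" using indicator_singleton_in_Sig by blast
  have "T1 V = (\<Sum>i\<in>I. (V!m) i * T1 (V[m := indicator {i}]))"
    using multilinear_on_sum[OF T1 V \<open>m < n\<close> I diracs, of "\<lambda>i. (V!m) i"] expand by simp
  also have "\<dots> = (\<Sum>i\<in>I. (V!m) i * T2 (V[m := indicator {i}]))" using slot by simp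
  also have "\<dots> = T2 V"
    using multilinear_on_sum[OF T2 V \<open>m < n\<close> I diracs, of "\<lambda>i. (V!m) i"] expand by simp
  finally show ?thesis .
qed

lemma multilinear_on_eqI_dirac_list:
  assumes I: "finite I" and T1: "multilinear_on n I T1" and T2: "multilinear_on n I T2"
    and dirac: "\<And>\<iota>. \<forall>k<n. \<iota> k \<in> I \<Longrightarrow> T1 (dirac_list n \<iota>) = T2 (dirac_list n \<iota>)"
    and V: "length V = n" "set V \<subseteq> Sig I"
  shows "T1 V = T2 V"
proof -
  let ?diracs = "(\<lambda>i. indicator {i}) ` I"
  have claim: "T1 V = T2 V" if "length V = n" "set V \<subseteq> Sig I" "\<forall>k\<in>{m..<n}. V!k \<in> ?diracs" for m V
    using that
  proof (induction m arbitrary: V)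
    case 0
    define \<iota> where "\<iota> k = (SOME i. i \<in> I \<and> V!k = indicator {i})" for k
    have \<iota>: "\<iota> k \<in> I \<and> V!k = indicator {\<iota> k}" if "k < n" for k
      unfolding \<iota>_def by (rule someI_ex) (use 0 that in auto)
    have "V = dirac_list n \<iota>"
      by (rule nth_equalityI) (use 0 \<iota> in \<open>auto simp: dirac_list_def\<close>)
    then show ?case using dirac \<iota> by simp
  next
    case (Suc m)
    show ?case
    proof (cases "m < n")
      case False
      then show ?thesis using Suc by simp
    next
      case True
      show ?thesis
      proof (rule multilinear_on_eqI_slot[OF I T1 T2 Suc.prems(1,2) True])
        fix i assume "i \<in> I"
        have "set (V[m := indicator {i}]) \<subseteq> Sig I"
          using Suc.prems(2) indicator_singleton_in_Sig[OF \<open>i \<in> I\<close>] set_update_subset_insert by fastforce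
        moreover have "\<forall>k\<in>{m..<n}. V[m := indicator {i}]!k \<in> ?diracs"
          using Suc.prems \<open>i \<in> I\<close> by (auto simp: nth_list_update)
        ultimately show "T1 (V[m := indicator {i}]) = T2 (V[m := indicator {i}])"
          using Suc.IH Suc.prems(1) by simp
      qed
    qed
  qed
  show ?thesis by (rule claim[OF V, of n]) simp
qed

lemma multilinear_on_sum_comb:
  assumes "finite S" "\<forall>P\<in>S. multilinear_on n I (T P)"
  shows "multilinear_on n I (\<lambda>V. \<Sum>P\<in>S. b P * T P V)"
  unfolding multilinear_on_def
proof (intro allI impI ballI)
  fix V j x y and c :: real
  assume V: "length V = n \<and> set V \<subseteq> Sig I" and j: "j < n" and x: "x \<in> Sig I" and y: "y \<in> Sig I"
  have "T P (V[j := (\<lambda>i. c * x i + y i)]) = c * T P (V[j := x]) + T P (V[j := y])" if "P \<in> S" for P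
    using multilinear_onD[of n I "T P" V j x y c] assms(2) that V j x y by blast
  then have "(\<Sum>P\<in>S. b P * T P (V[j := (\<lambda>i. c * x i + y i)]))
      = (\<Sum>P\<in>S. c * (b P * T P (V[j := x])) + b P * T P (V[j := y]))"
    by (intro sum.cong) (auto simp: algebra_simps)
  also have "\<dots> = c * (\<Sum>P\<in>S. b P * T P (V[j := x])) + (\<Sum>P\<in>S. b P * T P (V[j := y]))"
    by (simp add: sum.distrib sum_distrib_left)
  finally show "(\<Sum>P\<in>S. b P * T P (V[j := (\<lambda>i. c * x i + y i)]))
      = c * (\<Sum>P\<in>S. b P * T P (V[j := x])) + (\<Sum>P\<in>S. b P * T P (V[j := y]))" .
qed

section \<open>The tensors \<open>tauP\<close> as products over blocks\<close>

definition tau_block :: "nat set \<Rightarrow> nat set \<Rightarrow> (nat \<Rightarrow> real) \<Rightarrow> (nat \<Rightarrow> real) list \<Rightarrow> real" where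
  "tau_block I B \<mu> V = (\<Sum>i\<in>I. \<mu> i powr (1 - real (card B)) * (\<Prod>j\<in>B. (V!j) i))"

lemma tauP_eq_prod_tau_block:
  assumes "P \<in> Part n"
  shows "tauP I P \<mu> V = (\<Prod>B\<in>P. tau_block I B \<mu> V)"
  unfolding tauP_def
proof (rule prod.cong[OF refl])
  fix B assume "B \<in> P"
  then have "finite B" using Part_block assms by blast
  define xs where "xs = sorted_list_of_set B"
  have len: "length xs = card B" unfolding xs_def by simp
  have bij: "bij_betw ((!) xs) {..<card B} B"
    by (rule bij_betw_nth) (use \<open>finite B\<close> len in \<open>auto simp: xs_def\<close>)
  have "(\<Prod>k<card B. (map ((!) V) xs ! k) i) = (\<Prod>j\<in>B. (V!j) i)" for i
  proof -
    have "(\<Prod>k<card B. (map ((!) V) xs ! k) i) = (\<Prod>k<card B. (V ! (xs ! k)) i)"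
      by (rule prod.cong) (use len in auto)
    also have "\<dots> = (\<Prod>j\<in>B. (V!j) i)" by (rule prod.reindex_bij_betw[OF bij])
    finally show ?thesis .
  qed
  then show "tau_m I (card B) \<mu> (map ((!) V) (sorted_list_of_set B)) = tau_block I B \<mu> V"
    unfolding tau_m_def tau_block_def xs_def[symmetric] using len by simp
qed

lemma tau_block_update_outside:
  assumes "j \<notin> B"
  shows "tau_block I B \<mu> (V[j := z]) = tau_block I B \<mu> V"
proof -
  have "(\<Prod>l\<in>B. (V[j := z] ! l) i) = (\<Prod>l\<in>B. (V ! l) i)" for i
    by (rule prod.cong) (use assms in \<open>metis nth_list_update_neq\<close>)+
  then show ?thesis unfolding tau_block_def by simp
qed

lemma tau_block_update_linear:
  assumes "finite B" "j \<in> B" "j < length V"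
  shows "tau_block I B \<mu> (V[j := (\<lambda>i. c * x i + y i)])
       = c * tau_block I B \<mu> (V[j := x]) + tau_block I B \<mu> (V[j := y])"
proof -
  have split: "(\<Prod>l\<in>B. (V[j := z] ! l) i) = z i * (\<Prod>l\<in>B - {j}. (V ! l) i)" for z :: "nat \<Rightarrow> real" and i
    using assms by (simp add: prod.remove)
  show ?thesis
    unfolding tau_block_def split by (simp add: sum.distrib sum_distrib_left algebra_simps)
qed

lemma multilinear_on_tauP: "P \<in> Part n \<Longrightarrow> multilinear_on n I (tauP I P \<mu>)"
  unfolding multilinear_on_def
proof (intro allI impI ballI)
  fix V j x y and c :: real
  assume P: "P \<in> Part n" and V: "length V = n \<and> set V \<subseteq> Sig I" and j: "j < n"
  have pP: "partition_on {0..<n} P" using P unfolding Part_def by simp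
  obtain B0 where B0: "B0 \<in> P" "j \<in> B0"
    using partition_onD1[OF pP] j by (metis UnionE atLeastLessThan_iff le0)
  have "finite P" using finite_elements[OF _ pP] by simp
  have other: "tau_block I B \<mu> (V[j := z]) = tau_block I B \<mu> V" if "B \<in> P - {B0}" for B z
    using that partition_on_part_unique[OF pP, of B B0 j] B0 by (intro tau_block_update_outside) auto
  have split: "tauP I P \<mu> (V[j := z]) = tau_block I B0 \<mu> (V[j := z]) * (\<Prod>B\<in>P - {B0}. tau_block I B \<mu> V)"
    for z
    unfolding tauP_eq_prod_tau_block[OF P] using \<open>finite P\<close> B0(1) other
    by (simp add: prod.remove)
  show "tauP I P \<mu> (V[j := (\<lambda>i. c * x i + y i)]) = c * tauP I P \<mu> (V[j := x]) + tauP I P \<mu> (V[j := y])"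
    unfolding split using tau_block_update_linear[of B0 j V] Part_block[OF P B0(1)] B0(2) j V
    by (simp add: algebra_simps)
qed

section \<open>Congruent Markov kernels\<close>

lemma congruent_markov_kernelE:
  assumes "congruent_markov_kernel I I' K"
  obtains \<kappa> where "\<forall>i'\<in>I'. \<kappa> i' \<in> I" "\<forall>i\<in>I. \<forall>i'\<in>I'. \<kappa> i' \<noteq> i \<longrightarrow> K i i' = 0"
    "\<forall>i\<in>I. \<forall>i'\<in>I'. K i i' \<ge> 0" "\<forall>i\<in>I. (\<Sum>i'\<in>I'. K i i') = 1"
  using assms unfolding congruent_markov_kernel_def by blast

context
  fixes I I' :: "nat set" and K :: "nat \<Rightarrow> nat \<Rightarrow> real" and \<kappa> :: "nat \<Rightarrow> nat"
  assumes finite_I: "finite I" and finite_I': "finite I'"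
    and \<kappa>_into: "\<forall>i'\<in>I'. \<kappa> i' \<in> I"
    and K_support: "\<forall>i\<in>I. \<forall>i'\<in>I'. \<kappa> i' \<noteq> i \<longrightarrow> K i i' = 0"
    and K_nonneg: "\<forall>i\<in>I. \<forall>i'\<in>I'. K i i' \<ge> 0"
    and K_stochastic: "\<forall>i\<in>I. (\<Sum>i'\<in>I'. K i i') = 1"
begin

lemma push_apply: "i' \<in> I' \<Longrightarrow> push I I' K x i' = K (\<kappa> i') i' * x (\<kappa> i')"
proof -
  assume i': "i' \<in> I'"
  have "(\<Sum>i\<in>I. K i i' * x i) = (\<Sum>i\<in>I. if i = \<kappa> i' then K (\<kappa> i') i' * x (\<kappa> i') else 0)"
    by (rule sum.cong) (use K_support i' in auto)
  also have "\<dots> = K (\<kappa> i') i' * x (\<kappa> i')" using finite_I \<kappa>_into i' by simp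
  finally show ?thesis unfolding push_def using i' by simp
qed

lemma sum_push_weights: "(\<Sum>i'\<in>I'. K (\<kappa> i') i' * G (\<kappa> i')) = (\<Sum>i\<in>I. G i)"
proof -
  have "(\<Sum>i'\<in>I'. K (\<kappa> i') i' * G (\<kappa> i')) = (\<Sum>i\<in>I. \<Sum>i'\<in>{i'\<in>I'. \<kappa> i' = i}. K (\<kappa> i') i' * G (\<kappa> i'))"
    by (rule sum.group[symmetric]) (use finite_I finite_I' \<kappa>_into in auto)
  also have "\<dots> = (\<Sum>i\<in>I. G i)"
  proof (rule sum.cong[OF refl])
    fix i assume i: "i \<in> I"
    have "(\<Sum>i'\<in>{i'\<in>I'. \<kappa> i' = i}. K (\<kappa> i') i' * G (\<kappa> i')) = (\<Sum>i'\<in>{i'\<in>I'. \<kappa> i' = i}. K i i') * G i"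
      by (simp add: sum_distrib_right)
    also have "(\<Sum>i'\<in>{i'\<in>I'. \<kappa> i' = i}. K i i') = (\<Sum>i'\<in>I'. K i i')"
      using finite_I' K_support i by (intro sum.mono_neutral_left) auto
    finally show "(\<Sum>i'\<in>{i'\<in>I'. \<kappa> i' = i}. K (\<kappa> i') i' * G (\<kappa> i')) = G i"
      using K_stochastic i by simp
  qed
  finally show ?thesis .
qed

lemma norm1_push: "norm1 I' (push I I' K \<mu>) = norm1 I \<mu>"
proof -
  have "norm1 I' (push I I' K \<mu>) = (\<Sum>i'\<in>I'. K (\<kappa> i') i' * \<bar>\<mu> (\<kappa> i')\<bar>)"
    unfolding norm1_def
    by (rule sum.cong[OF refl]) (use K_nonneg \<kappa>_into in \<open>simp add: push_apply abs_mult\<close>)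
  then show ?thesis unfolding norm1_def by (simp add: sum_push_weights[of "\<lambda>i. \<bar>\<mu> i\<bar>"])
qed

lemma tau_block_push:
  assumes pushed: "push I I' K \<mu> \<in> Mplus I'" and \<mu>: "\<mu> \<in> Mplus I"
    and B: "finite B" "\<forall>j\<in>B. j < length V"
  shows "tau_block I' B (push I I' K \<mu>) (map (push I I' K) V) = tau_block I B \<mu> V"
proof -
  let ?G = "\<lambda>i. \<mu> i powr (1 - real (card B)) * (\<Prod>j\<in>B. (V!j) i)"
  have summand: "push I I' K \<mu> i' powr (1 - real (card B)) * (\<Prod>j\<in>B. (map (push I I' K) V ! j) i')
      = K (\<kappa> i') i' * ?G (\<kappa> i')" if i': "i' \<in> I'" for i'
  proof -
    define k where "k = K (\<kappa> i') i'"
    define u where "u = \<kappa> i'"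
    have "\<mu> u > 0" using \<mu> \<kappa>_into i' unfolding Mplus_def u_def by auto
    moreover have "push I I' K \<mu> i' > 0" using pushed i' unfolding Mplus_def by auto
    ultimately have k: "k > 0" using push_apply[OF i'] unfolding k_def u_def by (simp add: zero_less_mult_iff)
    have "(\<Prod>j\<in>B. (map (push I I' K) V ! j) i') = (\<Prod>j\<in>B. k * (V!j) u)"
      by (rule prod.cong) (use B push_apply[OF i'] in \<open>simp_all add: k_def u_def\<close>)
    also have "\<dots> = k ^ card B * (\<Prod>j\<in>B. (V!j) u)" by (simp add: prod.distrib)
    finally have "push I I' K \<mu> i' powr (1 - real (card B)) * (\<Prod>j\<in>B. (map (push I I' K) V ! j) i')
        = (k powr (1 - real (card B)) * k powr real (card B)) * ?G u"
      using push_apply[OF i', of \<mu>] k \<open>\<mu> u > 0\<close>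
      by (simp add: powr_mult powr_realpow k_def u_def algebra_simps)
    also have "k powr (1 - real (card B)) * k powr real (card B) = k"
      using k by (simp flip: powr_add)
    finally show ?thesis unfolding k_def u_def .
  qed
  have "tau_block I' B (push I I' K \<mu>) (map (push I I' K) V) = (\<Sum>i'\<in>I'. K (\<kappa> i') i' * ?G (\<kappa> i'))"
    unfolding tau_block_def by (rule sum.cong) (use summand in auto)
  then show ?thesis unfolding tau_block_def by (simp add: sum_push_weights[of ?G])
qed

end

lemma congruent_markov_kernel_tauP_push:
  assumes P: "P \<in> Part n" and V: "length V = n" and K: "congruent_markov_kernel I I' K"
    and fin: "finite I" "finite I'" and pushed: "push I I' K ` Mplus I \<subseteq> Mplus I'" and \<mu>: "\<mu> \<in> Mplus I"
  shows "tauP I' P (push I I' K \<mu>) (map (push I I' K) V) = tauP I P \<mu> V"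
proof -
  obtain \<kappa> where \<kappa>: "\<forall>i'\<in>I'. \<kappa> i' \<in> I" "\<forall>i\<in>I. \<forall>i'\<in>I'. \<kappa> i' \<noteq> i \<longrightarrow> K i i' = 0"
    "\<forall>i\<in>I. \<forall>i'\<in>I'. K i i' \<ge> 0" "\<forall>i\<in>I. (\<Sum>i'\<in>I'. K i i') = 1"
    using K by (rule congruent_markov_kernelE)
  have "push I I' K \<mu> \<in> Mplus I'" using pushed \<mu> by blast
  show ?thesis unfolding tauP_eq_prod_tau_block[OF P]
  proof (rule prod.cong[OF refl])
    fix B assume "B \<in> P"
    then have "finite B" "\<forall>j\<in>B. j < length V" using Part_block[OF P \<open>B \<in> P\<close>] V by auto
    then show "tau_block I' B (push I I' K \<mu>) (map (push I I' K) V) = tau_block I B \<mu> V"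
      by (rule tau_block_push[OF fin \<kappa> \<open>push I I' K \<mu> \<in> Mplus I'\<close> \<mu>])
  qed
qed

lemma congruent_markov_kernel_norm1_push:
  assumes K: "congruent_markov_kernel I I' K" and fin: "finite I" "finite I'"
  shows "norm1 I' (push I I' K \<mu>) = norm1 I \<mu>"
proof -
  obtain \<kappa> where \<kappa>: "\<forall>i'\<in>I'. \<kappa> i' \<in> I" "\<forall>i\<in>I. \<forall>i'\<in>I'. \<kappa> i' \<noteq> i \<longrightarrow> K i i' = 0"
    "\<forall>i\<in>I. \<forall>i'\<in>I'. K i i' \<ge> 0" "\<forall>i\<in>I. (\<Sum>i'\<in>I'. K i i') = 1"
    using K by (rule congruent_markov_kernelE)
  show ?thesis by (rule norm1_push[OF fin \<kappa>])
qed

lemma congruent_family_tauP_comb: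
  "congruent_family n (\<lambda>I \<mu> V. \<Sum>P\<in>Part n. a P (norm1 I \<mu>) * tauP I P \<mu> V)"
  unfolding congruent_family_def
proof (intro allI impI ballI)
  fix I I' K \<mu> V
  assume H: "finite I \<and> I \<noteq> {} \<and> finite I' \<and> I' \<noteq> {} \<and> congruent_markov_kernel I I' K
      \<and> push I I' K ` Mplus I \<subseteq> Mplus I'"
    and \<mu>: "\<mu> \<in> Mplus I" and V: "length V = n \<and> set V \<subseteq> Sig I"
  have "norm1 I' (push I I' K \<mu>) = norm1 I \<mu>" using congruent_markov_kernel_norm1_push H by blast
  then show "(\<Sum>P\<in>Part n. a P (norm1 I' (push I I' K \<mu>)) * tauP I' P (push I I' K \<mu>) (map (push I I' K) V))
      = (\<Sum>P\<in>Part n. a P (norm1 I \<mu>) * tauP I P \<mu> V)"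
    using congruent_markov_kernel_tauP_push H \<mu> V by (intro sum.cong) auto
qed

abbreviation centre :: "nat set \<Rightarrow> real \<Rightarrow> nat \<Rightarrow> real" where
  "centre I t \<equiv> \<lambda>i. t * cI I i"

lemma centre_in_Mplus: "finite I \<Longrightarrow> I \<noteq> {} \<Longrightarrow> t > 0 \<Longrightarrow> centre I t \<in> Mplus I"
  unfolding Mplus_def Sig_def cI_def by (auto simp: card_gt_0_iff)

lemma norm1_centre: "finite I \<Longrightarrow> I \<noteq> {} \<Longrightarrow> t > 0 \<Longrightarrow> norm1 I (centre I t) = t"
  unfolding norm1_def cI_def by (simp add: card_gt_0_iff)

definition split_kernel :: "(nat \<Rightarrow> nat) \<Rightarrow> nat \<Rightarrow> nat \<Rightarrow> nat \<Rightarrow> real" where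
  "split_kernel \<kappa> m i j = (if \<kappa> j = i then 1 / real m else 0)"

context
  fixes I J :: "nat set" and \<kappa> :: "nat \<Rightarrow> nat" and m :: nat
  assumes finite_I: "finite I" and \<kappa>_into: "\<forall>j\<in>J. \<kappa> j \<in> I"
begin

lemma push_split_kernel:
  "push I J (split_kernel \<kappa> m) x = (\<lambda>j. if j \<in> J then x (\<kappa> j) / real m else 0)"
proof
  fix j
  show "push I J (split_kernel \<kappa> m) x j = (if j \<in> J then x (\<kappa> j) / real m else 0)"
  proof (cases "j \<in> J")
    case True
    have "(\<Sum>i\<in>I. split_kernel \<kappa> m i j * x i) = (\<Sum>i\<in>I. if i = \<kappa> j then x (\<kappa> j) / real m else 0)"
      by (rule sum.cong) (auto simp: split_kernel_def)
    then show ?thesis unfolding push_def using finite_I \<kappa>_into True by simp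
  qed (simp add: push_def)
qed

lemma congruent_markov_kernel_split_kernel:
  assumes "finite J" and fibre: "\<forall>i\<in>I. card {j\<in>J. \<kappa> j = i} = m" and "m > 0"
  shows "congruent_markov_kernel I J (split_kernel \<kappa> m)"
  unfolding congruent_markov_kernel_def
proof (intro conjI)
  have "(\<Sum>j\<in>J. split_kernel \<kappa> m i j) = 1" if "i \<in> I" for i
  proof -
    have "(\<Sum>j\<in>J. split_kernel \<kappa> m i j) = (\<Sum>j\<in>J. if \<kappa> j = i then 1 / real m else 0)"
      unfolding split_kernel_def by simp
    also have "\<dots> = (\<Sum>j\<in>{j\<in>J. \<kappa> j = i}. 1 / real m)"
      using \<open>finite J\<close> by (rule sum.inter_filter[symmetric])
    finally show ?thesis using fibre that \<open>m > 0\<close> by simp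
  qed
  then show "\<forall>i\<in>I. (\<Sum>j\<in>J. split_kernel \<kappa> m i j) = 1" by blast
  show "\<forall>i\<in>I. \<forall>j\<in>J. 0 \<le> split_kernel \<kappa> m i j" unfolding split_kernel_def by simp
  show "\<exists>\<kappa>'. (\<forall>j\<in>J. \<kappa>' j \<in> I) \<and> (\<forall>i\<in>I. \<forall>j\<in>J. \<kappa>' j \<noteq> i \<longrightarrow> split_kernel \<kappa> m i j = 0)"
    using \<kappa>_into unfolding split_kernel_def by auto
qed

lemma push_split_kernel_Mplus:
  "m > 0 \<Longrightarrow> push I J (split_kernel \<kappa> m) ` Mplus I \<subseteq> Mplus J"
  using \<kappa>_into unfolding push_split_kernel Mplus_def Sig_def by auto

lemma push_split_kernel_centre:
  "card J = card I * m \<Longrightarrow> push I J (split_kernel \<kappa> m) (centre I t) = centre J t"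
  unfolding push_split_kernel cI_def using \<kappa>_into by auto

end

section \<open>Dirac tuples at the centre \<open>t c\<^sub>I\<close>\<close>

lemma congruent_family_dirac_list_fibres:
  assumes \<Theta>: "congruent_family n \<Theta>" and I: "finite I" "I \<noteq> {}" and "t > 0"
    and \<iota>: "\<forall>k<n. \<iota> k \<in> I" and \<iota>': "\<forall>k<n. \<iota>' k \<in> I"
    and fibres: "fibres {0..<n} \<iota> = fibres {0..<n} \<iota>'"
  shows "\<Theta> I (centre I t) (dirac_list n \<iota>) = \<Theta> I (centre I t) (dirac_list n \<iota>')"
proof -
  \<comment> \<open>The permutation kernel of \<open>\<kappa>\<close> fixes the centre and carries one Dirac list to the other.\<close>
  obtain \<kappa> where \<kappa>: "bij_betw \<kappa> I I" "\<forall>k<n. \<kappa> (\<iota>' k) = \<iota> k"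
    using exists_permutation_fibres_eq[OF I(1) \<iota> \<iota>' fibres] .
  have \<kappa>_into: "\<forall>j\<in>I. \<kappa> j \<in> I" using \<kappa>(1) by (auto dest: bij_betwE)
  let ?K = "split_kernel \<kappa> 1"
  have K: "congruent_markov_kernel I I ?K"
    using congruent_markov_kernel_split_kernel[OF I(1) \<kappa>_into I(1)] card_fibre_bij_betw[OF \<kappa>(1)] by simp
  have centre: "push I I ?K (centre I t) = centre I t"
    using push_split_kernel_centre[OF I(1) \<kappa>_into] by simp
  have "push I I ?K (indicator {\<iota> k}) = indicator {\<iota>' k}" if k: "k < n" for k
  proof
    fix j
    have "j \<in> I \<Longrightarrow> \<kappa> j = \<iota> k \<longleftrightarrow> j = \<iota>' k"
      using \<kappa> k \<iota>' unfolding bij_betw_def by (metis inj_on_eq_iff)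
    then show "push I I ?K (indicator {\<iota> k}) j = indicator {\<iota>' k} j"
      unfolding push_split_kernel[OF I(1) \<kappa>_into] using \<iota>' k by (auto simp: indicator_def)
  qed
  then have "map (push I I ?K) (dirac_list n \<iota>) = dirac_list n \<iota>'"
    unfolding dirac_list_def by simp
  then show ?thesis
    using \<Theta> I K push_split_kernel_Mplus[OF I(1) \<kappa>_into] centre_in_Mplus[OF I \<open>t > 0\<close>]
      dirac_list_in_Sig[OF \<iota>] centre
    unfolding congruent_family_def by (metis zero_less_one)
qed

definition centre_weight :: "nat set \<Rightarrow> real \<Rightarrow> nat set set \<Rightarrow> real" where
  "centre_weight I t P = (\<Prod>B\<in>P. (t / real (card I)) powr (1 - real (card B)))"

lemma centre_weight_nonzero:
  assumes "finite I" "I \<noteq> {}" "t > 0"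
  shows "centre_weight I t P \<noteq> 0"
proof -
  have "0 < centre_weight I t P"
    unfolding centre_weight_def using assms by (intro prod_pos) (simp add: card_gt_0_iff)
  then show ?thesis by simp
qed

lemma prod_indicator_singleton:
  "finite B \<Longrightarrow> (\<Prod>j\<in>B. indicator {\<iota> j} i :: real) = (if \<forall>j\<in>B. \<iota> j = i then 1 else 0)"
  by (induction B rule: finite_induct) (auto simp: indicator_def)

lemma tau_block_centre_dirac_list:
  assumes I: "finite I" and B: "finite B" "B \<noteq> {}" "B \<subseteq> {0..<n}" and \<iota>: "\<forall>k<n. \<iota> k \<in> I"
  shows "tau_block I B (centre I t) (dirac_list n \<iota>)
       = (if \<forall>x\<in>B. \<forall>y\<in>B. \<iota> x = \<iota> y then (t / real (card I)) powr (1 - real (card B)) else 0)"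
proof -
  obtain j0 where j0: "j0 \<in> B" using B(2) by blast
  define const where "const \<longleftrightarrow> (\<forall>x\<in>B. \<forall>y\<in>B. \<iota> x = \<iota> y)"
  define w where "w = (t / real (card I)) powr (1 - real (card B))"
  have const_iff: "(\<forall>j\<in>B. \<iota> j = i) \<longleftrightarrow> i = \<iota> j0 \<and> const" for i
  proof
    assume "\<forall>j\<in>B. \<iota> j = i"
    then show "i = \<iota> j0 \<and> const" unfolding const_def using j0 by simp
  next
    assume a: "i = \<iota> j0 \<and> const"
    show "\<forall>j\<in>B. \<iota> j = i"
    proof
      fix j assume "j \<in> B"
      have "\<iota> j = \<iota> j0" using a \<open>j \<in> B\<close> j0 unfolding const_def by blast
      then show "\<iota> j = i" using a by simp
    qed
  qed
  have "centre I t i powr (1 - real (card B)) * (\<Prod>j\<in>B. (dirac_list n \<iota> ! j) i)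
      = (if i = \<iota> j0 \<and> const then w else 0)" if "i \<in> I" for i
  proof -
    have "(\<Prod>j\<in>B. (dirac_list n \<iota> ! j) i) = (\<Prod>j\<in>B. indicator {\<iota> j} i)"
      by (rule prod.cong) (use B(3) in \<open>auto simp: dirac_list_def\<close>)
    also have "\<dots> = (if i = \<iota> j0 \<and> const then 1 else 0)"
      unfolding prod_indicator_singleton[OF B(1)] const_iff ..
    finally show ?thesis using that unfolding w_def cI_def by simp
  qed
  then have "tau_block I B (centre I t) (dirac_list n \<iota>) = (\<Sum>i\<in>I. if i = \<iota> j0 \<and> const then w else 0)"
    unfolding tau_block_def by (rule sum.cong[OF refl])
  also have "\<dots> = (if const then w else 0)"
    using I B(3) j0 \<iota> by (cases const) auto
  finally show ?thesis unfolding const_def w_def .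
qed

lemma tauP_centre_dirac_list:
  assumes P: "P \<in> Part n" and I: "finite I" and \<iota>: "\<forall>k<n. \<iota> k \<in> I"
  shows "tauP I P (centre I t) (dirac_list n \<iota>)
       = (if refines {0..<n} P (fibres {0..<n} \<iota>) then centre_weight I t P else 0)"
proof -
  have pP: "partition_on {0..<n} P" using P unfolding Part_def by simp
  have "finite P" using finite_elements[OF _ pP] by simp
  have block: "tau_block I B (centre I t) (dirac_list n \<iota>)
      = (if \<forall>x\<in>B. \<forall>y\<in>B. \<iota> x = \<iota> y then (t / real (card I)) powr (1 - real (card B)) else 0)"
    if "B \<in> P" for B
  proof -
    have "finite B" "B \<noteq> {}" "B \<subseteq> {0..<n}"
      using Part_block[OF P that] partition_onD3[OF pP] that by auto
    then show ?thesis by (rule tau_block_centre_dirac_list[OF I _ _ _ \<iota>])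
  qed
  show ?thesis
  proof (cases "refines {0..<n} P (fibres {0..<n} \<iota>)")
    case True
    then have const: "\<forall>B\<in>P. \<forall>x\<in>B. \<forall>y\<in>B. \<iota> x = \<iota> y" using refines_fibres_iff[OF pP] by blast
    have "tau_block I B (centre I t) (dirac_list n \<iota>) = (t / real (card I)) powr (1 - real (card B))"
      if "B \<in> P" for B
      unfolding block[OF that] using const that by (intro if_P) blast
    then have "tauP I P (centre I t) (dirac_list n \<iota>) = centre_weight I t P"
      unfolding tauP_eq_prod_tau_block[OF P] centre_weight_def by (rule prod.cong[OF refl])
    then show ?thesis using True by simp
  next
    case False
    then obtain B where "B \<in> P" and nonconst: "\<not> (\<forall>x\<in>B. \<forall>y\<in>B. \<iota> x = \<iota> y)"
      using refines_fibres_iff[OF pP] by blast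
    have "tau_block I B (centre I t) (dirac_list n \<iota>) = 0"
      unfolding block[OF \<open>B \<in> P\<close>] using nonconst by (rule if_not_P)
    then show ?thesis
      unfolding tauP_eq_prod_tau_block[OF P] using False \<open>finite P\<close> \<open>B \<in> P\<close> by (simp add: prod_zero_iff) blast
  qed
qed

lemma sum_tauP_centre_dirac_list:
  assumes "finite I" "\<forall>k<n. \<iota> k \<in> I"
  shows "(\<Sum>P\<in>Part n. b P * tauP I P (centre I t) (dirac_list n \<iota>))
       = (\<Sum>P\<in>{P \<in> Part n. refines {0..<n} P (fibres {0..<n} \<iota>)}. b P * centre_weight I t P)"
proof -
  have "(\<Sum>P\<in>Part n. b P * tauP I P (centre I t) (dirac_list n \<iota>))
      = (\<Sum>P\<in>Part n. if refines {0..<n} P (fibres {0..<n} \<iota>) then b P * centre_weight I t P else 0)"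
    by (rule sum.cong) (simp_all add: tauP_centre_dirac_list assms)
  also have "\<dots> = (\<Sum>P\<in>{P \<in> Part n. refines {0..<n} P (fibres {0..<n} \<iota>)}. b P * centre_weight I t P)"
    by (rule sum.inter_filter[OF finite_Part, symmetric])
  finally show ?thesis .
qed

section \<open>Expansions in the tensors \<open>tauP\<close>\<close>

definition tau_expansion ::
  "nat \<Rightarrow> nat set \<Rightarrow> (nat \<Rightarrow> real) \<Rightarrow> (nat set set \<Rightarrow> real) \<Rightarrow> ((nat \<Rightarrow> real) list \<Rightarrow> real) \<Rightarrow> bool" where
  "tau_expansion n I \<mu> b T \<longleftrightarrow>
     (\<forall>V. length V = n \<and> set V \<subseteq> Sig I \<longrightarrow> T V = (\<Sum>P\<in>Part n. b P * tauP I P \<mu> V))"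

lemma tau_expansion_exists:
  assumes I: "finite I" "I \<noteq> {}" "n \<le> card I" and "t > 0" and T: "multilinear_on n I T"
    and invariant: "\<And>\<iota> \<iota>'. \<forall>k<n. \<iota> k \<in> I \<Longrightarrow> \<forall>k<n. \<iota>' k \<in> I \<Longrightarrow>
      fibres {0..<n} \<iota> = fibres {0..<n} \<iota>' \<Longrightarrow> T (dirac_list n \<iota>) = T (dirac_list n \<iota>')"
  shows "\<exists>b. tau_expansion n I (centre I t) b T"
proof -
  define \<iota>Q where "\<iota>Q Q = (SOME \<iota>. (\<forall>k<n. \<iota> k \<in> I) \<and> fibres {0..<n} \<iota> = Q)" for Q
  have \<iota>Q: "(\<forall>k<n. \<iota>Q Q k \<in> I) \<and> fibres {0..<n} (\<iota>Q Q) = Q" if Q: "Q \<in> Part n" for Q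
  proof -
    obtain \<iota> where "\<forall>k<n. \<iota> k \<in> I" "fibres {0..<n} \<iota> = Q"
      using exists_fibres_eq_Part[OF Q I(1,3)] .
    then have "\<exists>\<iota>. (\<forall>k<n. \<iota> k \<in> I) \<and> fibres {0..<n} \<iota> = Q" by blast
    then show ?thesis unfolding \<iota>Q_def by (rule someI_ex)
  qed
  obtain d where d: "\<forall>Q\<in>Part n. T (dirac_list n (\<iota>Q Q)) = (\<Sum>P\<in>{P \<in> Part n. refines {0..<n} P Q}. d P)"
    using Part_unitriangular_system_solvable[where f="\<lambda>Q. T (dirac_list n (\<iota>Q Q))" and n=n] by blast
  define b where "b P = d P / centre_weight I t P" for P
  have "T V = (\<Sum>P\<in>Part n. b P * tauP I P (centre I t) V)" if "length V = n" "set V \<subseteq> Sig I" for V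
  proof (rule multilinear_on_eqI_dirac_list[OF I(1) T _ _ that])
    show "multilinear_on n I (\<lambda>V. \<Sum>P\<in>Part n. b P * tauP I P (centre I t) V)"
      using finite_Part multilinear_on_tauP by (intro multilinear_on_sum_comb) auto
    fix \<iota> assume \<iota>: "\<forall>k<n. \<iota> k \<in> I"
    define Q where "Q = fibres {0..<n} \<iota>"
    have Q: "Q \<in> Part n" unfolding Q_def by (rule fibres_in_Part)
    have "T (dirac_list n \<iota>) = T (dirac_list n (\<iota>Q Q))"
      using invariant[OF \<iota>] \<iota>Q[OF Q] unfolding Q_def by auto
    also have "\<dots> = (\<Sum>P\<in>{P \<in> Part n. refines {0..<n} P Q}. b P * centre_weight I t P)"
      using d Q centre_weight_nonzero[OF I(1,2) \<open>t > 0\<close>] unfolding b_def by simp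
    also have "\<dots> = (\<Sum>P\<in>Part n. b P * tauP I P (centre I t) (dirac_list n \<iota>))"
      unfolding Q_def using sum_tauP_centre_dirac_list[OF I(1) \<iota>] by simp
    finally show "T (dirac_list n \<iota>) = (\<Sum>P\<in>Part n. b P * tauP I P (centre I t) (dirac_list n \<iota>))" .
  qed
  then show ?thesis unfolding tau_expansion_def by blast
qed

lemma tau_expansion_unique:
  assumes I: "finite I" "I \<noteq> {}" "n \<le> card I" and "t > 0"
    and a: "tau_expansion n I (centre I t) a T" and b: "tau_expansion n I (centre I t) b T"
  shows "\<forall>P\<in>Part n. a P = b P"
proof -
  have "\<forall>Q\<in>Part n. (\<Sum>P\<in>{P \<in> Part n. refines {0..<n} P Q}. (a P - b P) * centre_weight I t P) = 0"
  proof
    fix Q assume "Q \<in> Part n"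
    then obtain \<iota> where \<iota>: "\<forall>k<n. \<iota> k \<in> I" "fibres {0..<n} \<iota> = Q"
      using exists_fibres_eq_Part[OF \<open>Q \<in> Part n\<close> I(1,3)] by blast
    have "T (dirac_list n \<iota>) = (\<Sum>P\<in>Part n. a P * tauP I P (centre I t) (dirac_list n \<iota>))"
      "T (dirac_list n \<iota>) = (\<Sum>P\<in>Part n. b P * tauP I P (centre I t) (dirac_list n \<iota>))"
      using a b dirac_list_in_Sig[OF \<iota>(1)] unfolding tau_expansion_def by blast+
    then have "(\<Sum>P\<in>Part n. a P * tauP I P (centre I t) (dirac_list n \<iota>))
        = (\<Sum>P\<in>Part n. b P * tauP I P (centre I t) (dirac_list n \<iota>))" by simp
    then show "(\<Sum>P\<in>{P \<in> Part n. refines {0..<n} P Q}. (a P - b P) * centre_weight I t P) = 0"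
      unfolding sum_tauP_centre_dirac_list[OF I(1) \<iota>(1)] \<iota>(2)
      by (simp add: left_diff_distrib sum_subtractf)
  qed
  then have "\<forall>Q\<in>Part n. (a Q - b Q) * centre_weight I t Q = 0"
    by (rule Part_unitriangular_system_unique)
  then show ?thesis using centre_weight_nonzero[OF I(1,2) \<open>t > 0\<close>] by simp
qed

lemma tau_expansion_split_kernel:
  assumes \<Theta>: "congruent_family n \<Theta>" and I: "finite I" "I \<noteq> {}" and J: "finite J" "J \<noteq> {}"
    and \<kappa>_into: "\<forall>j\<in>J. \<kappa> j \<in> I" and fibre: "\<forall>i\<in>I. card {j\<in>J. \<kappa> j = i} = m" and "m > 0"
    and card: "card J = card I * m" and "t > 0"
    and expansion: "tau_expansion n J (centre J t) b (\<Theta> J (centre J t))"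
  shows "tau_expansion n I (centre I t) b (\<Theta> I (centre I t))"
  unfolding tau_expansion_def
proof (intro allI impI)
  fix V assume V: "length V = n \<and> set V \<subseteq> Sig I"
  let ?K = "split_kernel \<kappa> m"
  have K: "congruent_markov_kernel I J ?K"
    by (rule congruent_markov_kernel_split_kernel[OF I(1) \<kappa>_into J(1) fibre \<open>m > 0\<close>])
  have pushed: "push I J ?K ` Mplus I \<subseteq> Mplus J"
    by (rule push_split_kernel_Mplus[OF I(1) \<kappa>_into \<open>m > 0\<close>])
  have centre: "push I J ?K (centre I t) = centre J t"
    by (rule push_split_kernel_centre[OF I(1) \<kappa>_into card])
  have \<mu>: "centre I t \<in> Mplus I" using centre_in_Mplus[OF I \<open>t > 0\<close>] .
  have W: "length (map (push I J ?K) V) = n \<and> set (map (push I J ?K) V) \<subseteq> Sig J"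
    using V unfolding push_def Sig_def by auto
  have "\<Theta> I (centre I t) V = \<Theta> J (push I J ?K (centre I t)) (map (push I J ?K) V)"
    using \<Theta> I J K pushed \<mu> V unfolding congruent_family_def by metis
  also have "\<dots> = (\<Sum>P\<in>Part n. b P * tauP J P (push I J ?K (centre I t)) (map (push I J ?K) V))"
    using expansion W unfolding tau_expansion_def centre by blast
  also have "\<dots> = (\<Sum>P\<in>Part n. b P * tauP I P (centre I t) V)"
    using congruent_markov_kernel_tauP_push[OF _ _ K I(1) J(1) pushed \<mu>] V by simp
  finally show "\<Theta> I (centre I t) V = (\<Sum>P\<in>Part n. b P * tauP I P (centre I t) V)" .
qed

lemma card_prod_encode: "card (prod_encode ` (I \<times> I')) = card I * card I'"
  by (simp add: card_image[OF inj_prod_encode] card_cartesian_product)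

lemma card_fibre_fst_prod_encode:
  assumes "i \<in> I"
  shows "card {j \<in> prod_encode ` (I \<times> I'). fst (prod_decode j) = i} = card I'"
proof -
  have "{j \<in> prod_encode ` (I \<times> I'). fst (prod_decode j) = i} = prod_encode ` ({i} \<times> I')"
    using assms by force
  then show ?thesis by (simp add: card_image[OF inj_prod_encode] card_cartesian_product)
qed

lemma card_fibre_snd_prod_encode:
  assumes "i' \<in> I'"
  shows "card {j \<in> prod_encode ` (I \<times> I'). snd (prod_decode j) = i'} = card I"
proof -
  have "{j \<in> prod_encode ` (I \<times> I'). snd (prod_decode j) = i'} = prod_encode ` (I \<times> {i'})"
    using assms by force
  then show ?thesis by (simp add: card_image[OF inj_prod_encode] card_cartesian_product)
qed

lemma tau_expansion_prod_encode:
  assumes \<Theta>: "congruent_family n \<Theta>" and I: "finite I" "I \<noteq> {}" and I': "finite I'" "I' \<noteq> {}"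
    and "t > 0"
    and expansion: "tau_expansion n (prod_encode ` (I \<times> I')) (centre (prod_encode ` (I \<times> I')) t) b
      (\<Theta> (prod_encode ` (I \<times> I')) (centre (prod_encode ` (I \<times> I')) t))"
  shows "tau_expansion n I (centre I t) b (\<Theta> I (centre I t))"
    and "tau_expansion n I' (centre I' t) b (\<Theta> I' (centre I' t))"
proof -
  let ?J = "prod_encode ` (I \<times> I')"
  have J: "finite ?J" "?J \<noteq> {}" using I I' by auto
  have "card I > 0" "card I' > 0" using I I' by (simp_all add: card_gt_0_iff)
  show "tau_expansion n I (centre I t) b (\<Theta> I (centre I t))"
    by (rule tau_expansion_split_kernel[where \<kappa>="\<lambda>j. fst (prod_decode j)",
          OF \<Theta> I J _ _ \<open>card I' > 0\<close> card_prod_encode \<open>t > 0\<close> expansion])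
       (auto simp: card_fibre_fst_prod_encode)
  show "tau_expansion n I' (centre I' t) b (\<Theta> I' (centre I' t))"
    by (rule tau_expansion_split_kernel[where \<kappa>="\<lambda>j. snd (prod_decode j)",
          OF \<Theta> I' J _ _ \<open>card I > 0\<close> _ \<open>t > 0\<close> expansion])
       (auto simp: card_fibre_snd_prod_encode card_prod_encode)
qed

lemma congruent_family_tau_expansion_exists:
  assumes fields: "\<And>I. finite I \<Longrightarrow> I \<noteq> {} \<Longrightarrow> covariant_tensor_field n I (\<Theta> I)"
    and \<Theta>: "congruent_family n \<Theta>" and I: "finite I" "I \<noteq> {}" "n \<le> card I" and "t > 0"
  shows "\<exists>b. tau_expansion n I (centre I t) b (\<Theta> I (centre I t))"
proof (rule tau_expansion_exists[OF I \<open>t > 0\<close>])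
  show "multilinear_on n I (\<Theta> I (centre I t))"
    using fields[OF I(1,2)] centre_in_Mplus[OF I(1,2) \<open>t > 0\<close>]
    unfolding covariant_tensor_field_def multilinear_on_def by blast
qed (rule congruent_family_dirac_list_fibres[OF \<Theta> I(1,2) \<open>t > 0\<close>])

theorem lemma4p7:
  fixes n :: nat
    and \<Theta> :: "nat set \<Rightarrow> (nat \<Rightarrow> real) \<Rightarrow> (nat \<Rightarrow> real) list \<Rightarrow> real"
  assumes "\<And>I. finite I \<Longrightarrow> I \<noteq> {} \<Longrightarrow> covariant_tensor_field n I (\<Theta> I)"
    and "congruent_family n \<Theta>"
  shows "\<exists>a :: nat set set \<Rightarrow> real \<Rightarrow> real.
     congruent_family n (\<lambda>I \<mu> V. \<Sum>P\<in>Part n. a P (norm1 I \<mu>) * tauP I P \<mu> V) \<and>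
     (\<forall>I. finite I \<and> I \<noteq> {} \<longrightarrow> (\<forall>t>(0::real). \<forall>V. length V = n \<and> set V \<subseteq> Sig I \<longrightarrow>
        \<Theta> I (\<lambda>i. t * cI I i) V
          - (\<Sum>P\<in>Part n. a P (norm1 I (\<lambda>i. t * cI I i)) * tauP I P (\<lambda>i. t * cI I i) V) = 0))"
proof -
  define I0 where "I0 = {0..n}"
  have I0: "finite I0" "I0 \<noteq> {}" "n \<le> card I0" unfolding I0_def by simp_all
  define a where "a P t = (SOME b. tau_expansion n I0 (centre I0 t) b (\<Theta> I0 (centre I0 t))) P" for P t
  have a: "tau_expansion n I0 (centre I0 t) (\<lambda>P. a P t) (\<Theta> I0 (centre I0 t))" if "t > 0" for t
    unfolding a_def using congruent_family_tau_expansion_exists[OF assms I0 that] by (rule someI_ex)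
  have "\<Theta> I (centre I t) V = (\<Sum>P\<in>Part n. a P (norm1 I (centre I t)) * tauP I P (centre I t) V)"
    if I: "finite I" "I \<noteq> {}" and "t > 0" and V: "length V = n" "set V \<subseteq> Sig I" for I t V
  proof -
    \<comment> \<open>Expand on a set refining both \<open>I\<close> and \<open>I0\<close>, where the coefficients exist, and carry them down.\<close>
    let ?J = "prod_encode ` (I \<times> I0)"
    have J: "finite ?J" "?J \<noteq> {}" using I I0 by auto
    have "1 \<le> card I" using I by (simp add: Suc_le_eq card_gt_0_iff)
    then have "n \<le> card ?J" using I0(3) card_prod_encode by (metis le_trans mult_le_mono1 mult_1)
    then obtain b where "tau_expansion n ?J (centre ?J t) b (\<Theta> ?J (centre ?J t))"
      using congruent_family_tau_expansion_exists[OF assms J] \<open>t > 0\<close> by blast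
    note restrict = tau_expansion_prod_encode[OF assms(2) I I0(1,2) \<open>t > 0\<close> this]
    have "\<forall>P\<in>Part n. a P t = b P"
      by (rule tau_expansion_unique[OF I0 \<open>t > 0\<close> a[OF \<open>t > 0\<close>] restrict(2)])
    then show ?thesis
      using restrict(1) V unfolding tau_expansion_def norm1_centre[OF I \<open>t > 0\<close>] by simp
  qed
  then show ?thesis by (intro exI[of _ a] conjI congruent_family_tauP_comb) auto
qed

end
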